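(* Let $w,c\ge 0$ and let $(W_1,\ldots,W_n)$ be a $w$-colourable grading of a graph $G$. Let $H$ be a subgraph of $G$ (not necessarily induced) with $\chi(H)>w+2(c+\chi^1(G))$. Then there is an edge $uv$ of $H$ and a subset $X$ of $V(G)$ such that: $G[X]$ is connected; $u,v$ are both earlier than every vertex in $X$; exactly one of $u,v$ has a $G$-neighbour in $X$; and $\chi(X)>c$.
   Context: Graphs are finite and simple. For $X\subseteq V(G)$, $\chi(X)$ means $\chi(G[X])$. A grading of $G$ is a sequence $(W_1,\ldots,W_n)$ of pairwise disjoint subsets of $V(G)$ with union $V(G)$; it is $w$-colourable if $\chi(G[W_i])\le w$ for all $i$. A vertex $u$ is earlier than $v$ if $u\in W_i$, $v\in W_j$ with $i<j$. For $v\in V(G)$ and integer $\rho\ge 0$, $N^{\rho}[v]$ is the set of vertices at distance at most $\rho$ from $v$ in $G$; for $\rho\ge1$, $\chi^{\rho}(G)$ is the maximum of $\chi(N^{\rho}[v])$ over all $v\in V(G)$ (and $0$ for the null graph). *)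

theory Defs
  imports Main
begin

definition simple_graph :: "'a set \<Rightarrow> ('a \<Rightarrow> 'a \<Rightarrow> bool) \<Rightarrow> bool" where
  "simple_graph V E \<longleftrightarrow> finite V \<and> (\<forall>x y. E x y \<longrightarrow> x \<in> V \<and> y \<in> V \<and> x \<noteq> y \<and> E y x)"

definition subgraph :: "'a set \<Rightarrow> ('a \<Rightarrow> 'a \<Rightarrow> bool) \<Rightarrow> 'a set \<Rightarrow> ('a \<Rightarrow> 'a \<Rightarrow> bool) \<Rightarrow> bool" where
  "subgraph VH EH V E \<longleftrightarrow> simple_graph VH EH \<and> VH \<subseteq> V \<and> (\<forall>x y. EH x y \<longrightarrow> E x y)"

definition colouring :: "('a \<Rightarrow> 'a \<Rightarrow> bool) \<Rightarrow> 'a set \<Rightarrow> nat \<Rightarrow> ('a \<Rightarrow> nat) \<Rightarrow> bool" where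
  "colouring E X k f \<longleftrightarrow> (\<forall>x\<in>X. f x < k) \<and> (\<forall>x\<in>X. \<forall>y\<in>X. E x y \<longrightarrow> f x \<noteq> f y)"

text \<open>Chromatic number of the graph with vertex set X and adjacency E restricted to X;
  for X \<subseteq> V(G) this is chi(G[X]).\<close>
definition chi :: "('a \<Rightarrow> 'a \<Rightarrow> bool) \<Rightarrow> 'a set \<Rightarrow> nat" where
  "chi E X = (LEAST k. \<exists>f. colouring E X k f)"

fun ball :: "'a set \<Rightarrow> ('a \<Rightarrow> 'a \<Rightarrow> bool) \<Rightarrow> 'a \<Rightarrow> nat \<Rightarrow> 'a set" where
  "ball V E v 0 = {v}"
| "ball V E v (Suc r) = ball V E v r \<union> {y \<in> V. \<exists>x \<in> ball V E v r. E x y}"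

definition chi_rho :: "'a set \<Rightarrow> ('a \<Rightarrow> 'a \<Rightarrow> bool) \<Rightarrow> nat \<Rightarrow> nat" where
  "chi_rho V E \<rho> = (if V = {} then 0 else Max ((\<lambda>v. chi E (ball V E v \<rho>)) ` V))"

definition connected_in :: "('a \<Rightarrow> 'a \<Rightarrow> bool) \<Rightarrow> 'a set \<Rightarrow> bool" where
  "connected_in E X \<longleftrightarrow> X \<noteq> {} \<and>
     (\<forall>x\<in>X. \<forall>y\<in>X. (\<lambda>a b. a \<in> X \<and> b \<in> X \<and> E a b)\<^sup>*\<^sup>* x y)"

text \<open>Grading (W_1,...,W_n), given as W i for i < n (0-based).\<close>
definition grading :: "'a set \<Rightarrow> nat \<Rightarrow> (nat \<Rightarrow> 'a set) \<Rightarrow> bool" where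
  "grading V n W \<longleftrightarrow> (\<forall>i<n. \<forall>j<n. i \<noteq> j \<longrightarrow> W i \<inter> W j = {}) \<and> (\<Union>i<n. W i) = V"

definition colourable_grading :: "('a \<Rightarrow> 'a \<Rightarrow> bool) \<Rightarrow> 'a set \<Rightarrow> nat \<Rightarrow> (nat \<Rightarrow> 'a set) \<Rightarrow> nat \<Rightarrow> bool" where
  "colourable_grading E V n W w \<longleftrightarrow> grading V n W \<and> (\<forall>i<n. chi E (W i) \<le> w)"

definition earlier :: "nat \<Rightarrow> (nat \<Rightarrow> 'a set) \<Rightarrow> 'a \<Rightarrow> 'a \<Rightarrow> bool" where
  "earlier n W u v \<longleftrightarrow> (\<exists>i<n. \<exists>j<n. i < j \<and> u \<in> W i \<and> v \<in> W j)"

end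

theory Submission
  imports Defs
begin

text \<open>
  Suppose there is no such edge and set, let \<open>r = \<chi>\<^sup>1(G)\<close>, and call \<open>i\<close> the level of the
  vertices of \<open>W\<^sub>i\<close>. We split \<open>V(H)\<close> into three classes and colour \<open>H\<close> on them with
  \<open>c + r\<close>, \<open>r\<close> and \<open>w\<close> colours.

  The vertices \<open>x\<close> whose component in \<open>G[levels \<ge> level x]\<close> has chromatic number at most
  \<open>c + r\<close> are coloured along the components of the lowest levels for which this holds; even
  \<open>G\<close>-adjacent ones lie in the same such component.

  For a level \<open>k\<close> let the profile of \<open>x\<close> be the family of connected sets \<open>X\<close> above level
  \<open>k\<close> with \<open>\<chi>(X) > c\<close> that contain a neighbour of \<open>x\<close>. As there is no witness,
  \<open>H\<close>-adjacent vertices of level \<open>\<le> k\<close> have the same profile. If all vertices sharing the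
  profile of \<open>x\<close> have a common neighbour \<open>p\<close> (for the highest such \<open>k\<close>), then \<open>H\<close>-edges
  between such vertices lie in \<open>N\<^sup>1[p]\<close>, and \<open>r\<close> colours suffice.

  An edge \<open>xy\<close> with \<open>level x < level y\<close>, where \<open>y\<close> is not in the first class, produces such
  a \<open>p\<close> at \<open>k = level x\<close>: in the component \<open>Q\<close> of \<open>y\<close> above level \<open>k\<close>, the neighbours of
  \<open>x\<close> need at most \<open>r\<close> colours, so some component \<open>X\<close> of \<open>Q - N(x)\<close> has \<open>\<chi>(X) > c\<close>. It is
  not in the profile of \<open>x\<close>, but as \<open>Q\<close> is connected, \<open>X \<union> {p}\<close> is for some \<open>p \<in> N(x)\<close>.
  Hence the remaining \<open>H\<close>-edges stay inside single parts \<open>W\<^sub>i\<close>, and \<open>w\<close> colours suffice.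
\<close>

section \<open>Colourings\<close>

lemma colouring_mono: "colouring E X k f \<Longrightarrow> k \<le> k' \<Longrightarrow> colouring E X k' f"
  unfolding colouring_def by force

lemma colouring_subset: "colouring E Y k f \<Longrightarrow> X \<subseteq> Y \<Longrightarrow> colouring E X k f"
  unfolding colouring_def by blast

lemma colouring_subrel: "colouring E X k f \<Longrightarrow> (\<And>x y. F x y \<Longrightarrow> E x y) \<Longrightarrow> colouring F X k f"
  unfolding colouring_def by blast

lemma chi_le_colouring: "colouring E X k f \<Longrightarrow> chi E X \<le> k"
  unfolding chi_def by (rule Least_le) blast

lemma colouring_chi:
  assumes "finite X" "irreflp E"
  shows "\<exists>f. colouring E X (chi E X) f"
proof -
  obtain h where h: "bij_betw h X {0..<card X}"
    using ex_bij_betw_finite_nat[OF assms(1)] by blast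
  have "colouring E X (card X) h"
    using h assms(2) unfolding colouring_def bij_betw_def inj_on_def
    by (auto dest: irreflpD)
  then have "\<exists>k f. colouring E X k f" by blast
  then show ?thesis
    unfolding chi_def by (rule LeastI_ex)
qed

lemma colouring_if_chi_le:
  assumes "finite X" "irreflp E" "chi E X \<le> k"
  shows "\<exists>f. colouring E X k f"
proof -
  obtain f where "colouring E X (chi E X) f" using colouring_chi[OF assms(1,2)] ..
  then show ?thesis using assms(3) by (blast intro: colouring_mono)
qed

lemma chi_mono:
  assumes "X \<subseteq> Y" "finite Y" "irreflp E"
  shows "chi E X \<le> chi E Y"
proof -
  obtain f where "colouring E Y (chi E Y) f" using colouring_chi[OF assms(2,3)] ..
  then show ?thesis using assms(1) by (rule chi_le_colouring[OF colouring_subset])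
qed

lemma colouring_Un:
  assumes f: "colouring E A a f" and g: "colouring E B b g"
  shows "colouring E (A \<union> B) (a + b) (\<lambda>x. if x \<in> A then f x else a + g x)"
  unfolding colouring_def
proof (intro conjI ballI impI)
  fix x assume "x \<in> A \<union> B"
  then show "(if x \<in> A then f x else a + g x) < a + b"
    using f g unfolding colouring_def by auto
next
  fix x y assume "x \<in> A \<union> B" "y \<in> A \<union> B" "E x y"
  then show "(if x \<in> A then f x else a + g x) \<noteq> (if y \<in> A then f y else a + g y)"
    using f g unfolding colouring_def by (auto split: if_splits)
qed

lemma chi_Un:
  assumes "finite A" "finite B" "irreflp E"
  shows "chi E (A \<union> B) \<le> chi E A + chi E B"
proof -
  obtain f where "colouring E A (chi E A) f" using colouring_chi[OF assms(1,3)] ..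
  moreover obtain g where "colouring E B (chi E B) g" using colouring_chi[OF assms(2,3)] ..
  ultimately show ?thesis by (rule chi_le_colouring[OF colouring_Un])
qed

lemma colouring_piecewise:
  assumes "\<And>x. x \<in> A \<Longrightarrow> x \<in> S x"
    and "\<And>x y. x \<in> A \<Longrightarrow> y \<in> A \<Longrightarrow> F x y \<Longrightarrow> S x = S y \<and> E x y"
    and "\<And>x. x \<in> A \<Longrightarrow> \<exists>g. colouring E (S x) k g"
  shows "\<exists>f. colouring F A k f"
proof -
  define g where "g P = (SOME h. colouring E P k h)" for P
  have g: "colouring E (S x) k (g (S x))" if "x \<in> A" for x
    unfolding g_def using assms(3)[OF that] by (rule someI_ex)
  have "colouring F A k (\<lambda>x. g (S x) x)"
    unfolding colouring_def
  proof (intro conjI ballI impI)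
    fix x assume "x \<in> A"
    then show "g (S x) x < k" using g assms(1) unfolding colouring_def by blast
  next
    fix x y assume xy: "x \<in> A" "y \<in> A" "F x y"
    then have "S x = S y" "E x y" using assms(2) by auto
    then show "g (S x) x \<noteq> g (S y) y"
      using g[OF xy(1)] assms(1)[OF xy(1)] assms(1)[OF xy(2)] unfolding colouring_def by metis
  qed
  then show ?thesis by blast
qed

section \<open>Components\<close>

definition component :: "('a \<Rightarrow> 'a \<Rightarrow> bool) \<Rightarrow> 'a set \<Rightarrow> 'a \<Rightarrow> 'a set" where
  "component E A x = {y. (\<lambda>a b. a \<in> A \<and> b \<in> A \<and> E a b)\<^sup>*\<^sup>* x y}"

lemma component_refl: "x \<in> component E A x"
  unfolding component_def by simp

lemma component_subset: "x \<in> A \<Longrightarrow> component E A x \<subseteq> A"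
proof
  fix y assume "x \<in> A" "y \<in> component E A x"
  then have "(\<lambda>a b. a \<in> A \<and> b \<in> A \<and> E a b)\<^sup>*\<^sup>* x y" unfolding component_def by simp
  then show "y \<in> A" using \<open>x \<in> A\<close> by (induction rule: rtranclp_induct) auto
qed

lemma component_step:
  "a \<in> component E A x \<Longrightarrow> a \<in> A \<Longrightarrow> b \<in> A \<Longrightarrow> E a b \<Longrightarrow> b \<in> component E A x"
  unfolding component_def by (auto intro: rtranclp.rtrancl_into_rtrancl)

lemma component_eq:
  assumes "symp E" "y \<in> component E A x"
  shows "component E A y = component E A x"
proof -
  let ?R = "\<lambda>a b. a \<in> A \<and> b \<in> A \<and> E a b"
  have "symp ?R" using assms(1) unfolding symp_def by blast
  then have "?R\<^sup>*\<^sup>* y x" using assms(2) unfolding component_def by (auto dest: sympD[OF symp_rtranclp])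
  then show ?thesis using assms(2) unfolding component_def by (auto intro: rtranclp_trans)
qed

lemma component_mono: "A \<subseteq> B \<Longrightarrow> component E A x \<subseteq> component E B x"
  unfolding component_def by (auto elim!: rtranclp_mono[THEN predicate2D, rotated])

lemma connected_in_component:
  assumes "symp E" "x \<in> A"
  shows "connected_in E (component E A x)"
proof -
  let ?C = "component E A x"
  let ?R = "\<lambda>a b. a \<in> ?C \<and> b \<in> ?C \<and> E a b"
  have from_x: "?R\<^sup>*\<^sup>* x a" if "a \<in> ?C" for a
  proof -
    have "(\<lambda>a b. a \<in> A \<and> b \<in> A \<and> E a b)\<^sup>*\<^sup>* x a" using that unfolding component_def by simp
    then show ?thesis
    proof (induction rule: rtranclp_induct)
      case (step y z)
      then have "y \<in> ?C" "z \<in> ?C" unfolding component_def by (auto intro: rtranclp.rtrancl_into_rtrancl)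
      with step.hyps(2) have "?R y z" by simp
      with step.IH show ?case by (rule rtranclp.rtrancl_into_rtrancl)
    qed simp
  qed
  have "symp ?R" using assms(1) unfolding symp_def by blast
  have paths: "?R\<^sup>*\<^sup>* a b" if "a \<in> ?C" "b \<in> ?C" for a b
  proof -
    have "?R\<^sup>*\<^sup>* a x" using from_x[OF that(1)] sympD[OF symp_rtranclp[OF \<open>symp ?R\<close>]] by blast
    then show ?thesis using from_x[OF that(2)] by (rule rtranclp_trans)
  qed
  show ?thesis
    unfolding connected_in_def using component_refl[of x E A] paths by (intro conjI ballI) auto
qed

lemma connected_in_exit_edge:
  assumes "connected_in E Q" "X \<subseteq> Q" "a \<in> X" "b \<in> Q" "b \<notin> X"
  obtains x p where "x \<in> X" "p \<in> Q" "p \<notin> X" "E x p"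
proof -
  have "(\<lambda>a b. a \<in> Q \<and> b \<in> Q \<and> E a b)\<^sup>*\<^sup>* a b" using assms unfolding connected_in_def by blast
  then have "\<exists>x\<in>X. \<exists>p\<in>Q. p \<notin> X \<and> E x p" using assms(5)
    by (induction rule: rtranclp_induct) (use assms(3) in blast)+
  then show ?thesis using that by blast
qed

lemma connected_in_insert:
  assumes "symp E" "connected_in E X" "x \<in> X" "E x p"
  shows "connected_in E (insert p X)"
proof -
  let ?R = "\<lambda>a b. a \<in> insert p X \<and> b \<in> insert p X \<and> E a b"
  have in_X: "?R\<^sup>*\<^sup>* a b" if "a \<in> X" "b \<in> X" for a b
  proof -
    have "(\<lambda>a b. a \<in> X \<and> b \<in> X \<and> E a b)\<^sup>*\<^sup>* a b" using assms(2) that unfolding connected_in_def by blast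
    then show ?thesis by (rule rtranclp_mono[THEN predicate2D, rotated]) auto
  qed
  have "?R p x" "?R x p" using assms(1,3,4) unfolding symp_def by auto
  then have "?R\<^sup>*\<^sup>* a b" if "a \<in> insert p X" "b \<in> insert p X" for a b
    using that in_X[OF _ assms(3)] in_X[OF assms(3)] in_X
    by (auto intro: converse_rtranclp_into_rtranclp rtranclp.rtrancl_into_rtrancl)
  then show ?thesis unfolding connected_in_def by blast
qed

lemma ex_component_chi_gt:
  assumes "finite A" "irreflp E" "symp E" "c < chi E A"
  obtains z where "z \<in> A" "c < chi E (component E A z)"
proof -
  have "\<exists>f. colouring E A c f" if bounded: "\<forall>z\<in>A. chi E (component E A z) \<le> c"
  proof (rule colouring_piecewise[where S = "component E A" and E = E])
    show "\<And>y z. y \<in> A \<Longrightarrow> z \<in> A \<Longrightarrow> E y z \<Longrightarrow> component E A y = component E A z \<and> E y z"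
      using component_step[OF component_refl] component_eq[OF assms(3)] by metis
    show "\<And>z. z \<in> A \<Longrightarrow> \<exists>g. colouring E (component E A z) c g"
      using colouring_if_chi_le assms(1,2) bounded component_subset by (metis finite_subset)
  qed (rule component_refl)
  then show ?thesis using that assms(4) chi_le_colouring by (meson not_le)
qed

lemma component_minus_neighbours_exit:
  assumes "symp E" "connected_in E Q" "y \<in> Q" "E x y" "z \<in> Q" "\<not> E x z"
  obtains p v where "p \<in> Q" "E x p" "v \<in> component E (Q - {u. E x u}) z" "E v p"
proof -
  let ?X = "component E (Q - {u. E x u}) z"
  have "?X \<subseteq> Q - {u. E x u}" using assms(5,6) by (intro component_subset) simp
  moreover have "z \<in> ?X" by (rule component_refl)
  ultimately obtain v p where v: "v \<in> ?X" "p \<in> Q" "p \<notin> ?X" "E v p"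
    using connected_in_exit_edge[OF assms(2), of ?X z y] assms(3,4) by blast
  have "E x p"
  proof (rule ccontr)
    assume "\<not> E x p"
    with v \<open>?X \<subseteq> Q - {u. E x u}\<close> have "p \<in> ?X" by (auto intro: component_step[of v])
    with v show False by blast
  qed
  with v that show ?thesis by blast
qed

lemma ball_one: "ball V E v 1 = insert v {y \<in> V. E v y}"
  by auto

lemma chi_ball_le_chi_rho: "finite V \<Longrightarrow> v \<in> V \<Longrightarrow> chi E (ball V E v \<rho>) \<le> chi_rho V E \<rho>"
  unfolding chi_rho_def by (auto intro!: Max_ge)

section \<open>Graded graphs\<close>

locale graded_graph =
  fixes V :: "'a set" and E :: "'a \<Rightarrow> 'a \<Rightarrow> bool" and n :: nat and W :: "nat \<Rightarrow> 'a set"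
  assumes simple: "simple_graph V E" and grading: "grading V n W"
begin

lemma finite_V: "finite V"
  using simple unfolding simple_graph_def by blast

lemma irreflp_E: "irreflp E"
  using simple unfolding simple_graph_def irreflp_def by blast

lemma symp_E: "symp E"
  using simple unfolding simple_graph_def symp_def by blast

lemma edge_in_V: "E a b \<Longrightarrow> a \<in> V \<and> b \<in> V"
  using simple unfolding simple_graph_def by blast

lemma W_subset: "i < n \<Longrightarrow> W i \<subseteq> V"
  using grading unfolding grading_def by blast

lemma chi_le_chi_minus_neighbours:
  assumes "x \<in> V" "Q \<subseteq> V"
  shows "chi E Q \<le> chi E (Q - {u. E x u}) + chi_rho V E 1"
proof -
  have "finite Q" using finite_subset[OF assms(2) finite_V] .
  have "Q \<inter> {u. E x u} \<subseteq> ball V E x 1" unfolding ball_one using edge_in_V by auto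
  moreover have "finite (ball V E x 1)" using finite_V by (simp add: ball_one)
  ultimately have "chi E (Q \<inter> {u. E x u}) \<le> chi E (ball V E x 1)" using irreflp_E by (rule chi_mono)
  also have "\<dots> \<le> chi_rho V E 1" by (rule chi_ball_le_chi_rho[OF finite_V assms(1)])
  moreover have "chi E Q \<le> chi E (Q \<inter> {u. E x u}) + chi E (Q - {u. E x u})"
    using chi_Un[of "Q \<inter> {u. E x u}" "Q - {u. E x u}" E] \<open>finite Q\<close> irreflp_E
    by (simp add: Int_Diff_Un)
  ultimately show ?thesis by linarith
qed

definition level :: "'a \<Rightarrow> nat" where
  "level x = (THE i. i < n \<and> x \<in> W i)"

lemma level_eq: "i < n \<Longrightarrow> x \<in> W i \<Longrightarrow> level x = i"
  using grading unfolding level_def grading_def by blast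

lemma level_less: "x \<in> V \<Longrightarrow> level x < n" and in_W_level: "x \<in> V \<Longrightarrow> x \<in> W (level x)"
  using grading level_eq unfolding grading_def by blast+

lemma earlier_iff_level: "u \<in> V \<Longrightarrow> x \<in> V \<Longrightarrow> earlier n W u x \<longleftrightarrow> level u < level x"
  unfolding earlier_def using level_less in_W_level level_eq by metis

definition upper :: "nat \<Rightarrow> 'a set" where
  "upper k = {x \<in> V. k \<le> level x}"

lemma upper_subset: "upper k \<subseteq> V"
  unfolding upper_def by blast

lemma finite_upper: "finite (upper k)"
  using finite_subset[OF upper_subset finite_V] .

lemma upper_antimono: "k \<le> k' \<Longrightarrow> upper k' \<subseteq> upper k"
  unfolding upper_def by auto

lemma upper_empty: "n \<le> k \<Longrightarrow> upper k = {}"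
  unfolding upper_def using level_less by fastforce

definition upper_component :: "'a \<Rightarrow> 'a set" where
  "upper_component x = component E (upper (level x)) x"

definition least_small_level :: "nat \<Rightarrow> 'a \<Rightarrow> nat" where
  "least_small_level b x = (LEAST k. k \<le> level x \<and> chi E (component E (upper k) x) \<le> b)"

lemma least_small_level_spec:
  assumes "chi E (upper_component x) \<le> b"
  shows "least_small_level b x \<le> level x"
    and "chi E (component E (upper (least_small_level b x)) x) \<le> b"
  using LeastI[of "\<lambda>k. k \<le> level x \<and> chi E (component E (upper k) x) \<le> b" "level x"] assms
  unfolding least_small_level_def upper_component_def by auto

lemma least_small_level_le:
  "k \<le> level x \<Longrightarrow> chi E (component E (upper k) x) \<le> b \<Longrightarrow> least_small_level b x \<le> k"
  unfolding least_small_level_def by (rule Least_le) simp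

lemma small_components_eq:
  assumes x: "x \<in> V" "chi E (upper_component x) \<le> b"
    and y: "y \<in> V" "chi E (upper_component y) \<le> b"
    and "E x y" "least_small_level b x \<le> least_small_level b y"
  shows "component E (upper (least_small_level b x)) x = component E (upper (least_small_level b y)) y"
proof -
  let ?k = "least_small_level b"
  have "x \<in> upper (?k x)" "y \<in> upper (?k y)"
    using least_small_level_spec(1) x y unfolding upper_def by auto
  then have "y \<in> component E (upper (?k x)) x"
    using upper_antimono[OF assms(6)] assms(5) by (blast intro: component_step[OF component_refl])
  then have same: "component E (upper (?k x)) y = component E (upper (?k x)) x"
    by (rule component_eq[OF symp_E])
  have "?k x \<le> level y" using assms(6) least_small_level_spec(1)[OF y(2)] by simp
  then have "?k y \<le> ?k x"
    using same least_small_level_spec(2)[OF x(2)] by (auto intro: least_small_level_le)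
  with assms(6) same show ?thesis by simp
qed

lemma small_upper_components_colouring:
  "\<exists>f. colouring E {x \<in> V. chi E (upper_component x) \<le> b} b f" (is "\<exists>f. colouring E ?A b f")
proof (rule colouring_piecewise[where S = "\<lambda>x. component E (upper (least_small_level b x)) x"])
  fix x assume x: "x \<in> ?A"
  then have "x \<in> upper (least_small_level b x)"
    using least_small_level_spec(1) unfolding upper_def by auto
  then show "\<exists>g. colouring E (component E (upper (least_small_level b x)) x) b g"
    using colouring_if_chi_le[OF finite_subset[OF component_subset finite_upper] irreflp_E]
      least_small_level_spec(2) x by blast
next
  fix x y assume "x \<in> ?A" "y \<in> ?A" "E x y"
  moreover have "E y x" using \<open>E x y\<close> symp_E by (simp add: sympD)
  ultimately show "component E (upper (least_small_level b x)) x
      = component E (upper (least_small_level b y)) y \<and> E x y"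
    using small_components_eq[of x b y] small_components_eq[of y b x] nat_le_linear by auto
qed (rule component_refl)

definition profile :: "nat \<Rightarrow> nat \<Rightarrow> 'a \<Rightarrow> 'a set set" where
  "profile c k x = {X. X \<subseteq> upper (Suc k) \<and> connected_in E X \<and> c < chi E X \<and> (\<exists>v\<in>X. E x v)}"

definition profile_dominated :: "nat \<Rightarrow> nat \<Rightarrow> 'a \<Rightarrow> bool" where
  "profile_dominated c k x \<longleftrightarrow> (\<exists>p. \<forall>y. profile c k y = profile c k x \<longrightarrow> E y p)"

lemma profile_dominated_less: "profile_dominated c k x \<Longrightarrow> k < n"
proof (rule ccontr)
  assume "profile_dominated c k x" "\<not> k < n"
  then obtain p where "\<forall>y. profile c k y = profile c k x \<longrightarrow> E y p"
    unfolding profile_dominated_def by blast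
  moreover have "profile c k y = {}" for y
    using upper_empty \<open>\<not> k < n\<close> unfolding profile_def connected_in_def by auto
  ultimately have "E p p" by blast
  then show False using irreflp_E by (simp add: irreflpD)
qed

lemma profile_dominatedI:
  assumes "X \<subseteq> upper (Suc k)" "connected_in E X" "c < chi E X" "\<not> (\<exists>v\<in>X. E x v)"
    and "insert p X \<in> profile c k x"
  shows "profile_dominated c k x"
  unfolding profile_dominated_def
proof (intro exI allI impI)
  fix y assume same: "profile c k y = profile c k x"
  then have "X \<notin> profile c k y" using assms(4) unfolding profile_def by blast
  then have "\<not> (\<exists>v\<in>X. E y v)" using assms(1-3) unfolding profile_def by blast
  moreover have "\<exists>v\<in>insert p X. E y v" using assms(5) same unfolding profile_def by blast
  ultimately show "E y p" by blast
qed

lemma profile_dominated_if_edge_up: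
  assumes "x \<in> V" "E x y" "level x < level y"
    and big: "c + chi_rho V E 1 < chi E (upper_component y)"
  shows "profile_dominated c (level x) x"
proof -
  define Q where "Q = component E (upper (Suc (level x))) y"
  define N where "N = {u. E x u}"
  have y: "y \<in> upper (Suc (level x))" using assms(2,3) edge_in_V unfolding upper_def by auto
  have "Q \<subseteq> upper (Suc (level x))" unfolding Q_def using component_subset[OF y] .
  then have Q: "y \<in> Q" "Q \<subseteq> upper (Suc (level x))" "connected_in E Q" "finite Q"
    unfolding Q_def using component_refl connected_in_component[OF symp_E y]
    by (auto intro: finite_subset[OF _ finite_upper])
  have "upper_component y \<subseteq> Q"
    unfolding upper_component_def Q_def using assms(3) by (intro component_mono upper_antimono) simp
  then have "chi E (upper_component y) \<le> chi E Q" using chi_mono Q(4) irreflp_E by blast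
  moreover have "chi E Q \<le> chi E (Q - N) + chi_rho V E 1"
    unfolding N_def using chi_le_chi_minus_neighbours assms(1) Q(2) upper_subset by blast
  ultimately have "c < chi E (Q - N)" using big by linarith
  then obtain z where z: "z \<in> Q - N" and big_X: "c < chi E (component E (Q - N) z)"
    using ex_component_chi_gt[OF _ irreflp_E symp_E] Q(4) by blast
  define X where "X = component E (Q - N) z"
  obtain p v where p: "p \<in> Q" "E x p" and v: "v \<in> X" "E v p"
    using component_minus_neighbours_exit[OF symp_E Q(3,1) assms(2), of z] z
    unfolding X_def N_def by blast
  have X: "X \<subseteq> Q - N" "connected_in E X"
    unfolding X_def using component_subset[OF z] connected_in_component[OF symp_E z] by auto
  show ?thesis
  proof (rule profile_dominatedI)
    show "X \<subseteq> upper (Suc (level x))" "\<not> (\<exists>u\<in>X. E x u)"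
      using X(1) Q(2) unfolding N_def by auto
    show "connected_in E X" "c < chi E X" using X(2) big_X unfolding X_def by auto
    have "insert p X \<subseteq> Q" using X(1) p(1) by blast
    then have "chi E X \<le> chi E (insert p X)"
      using finite_subset[OF _ Q(4)] irreflp_E by (intro chi_mono) auto
    then show "insert p X \<in> profile c (level x) x"
      using p Q(2) X connected_in_insert[OF symp_E X(2) v] big_X
      unfolding profile_def X_def by auto
  qed
qed

end

section \<open>Colouring a subgraph without witnesses\<close>

locale witness_free_subgraph = graded_graph V E n W
  for V :: "'a set" and E and n and W +
  fixes w c :: nat and VH :: "'a set" and EH :: "'a \<Rightarrow> 'a \<Rightarrow> bool"
  assumes colourable_parts: "\<And>i. i < n \<Longrightarrow> chi E (W i) \<le> w"
    and subgraph: "subgraph VH EH V E"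
    and no_witness: "\<And>u v X. EH u v \<Longrightarrow> X \<subseteq> V \<Longrightarrow> connected_in E X
      \<Longrightarrow> \<forall>x\<in>X. earlier n W u x \<and> earlier n W v x \<Longrightarrow> c < chi E X
      \<Longrightarrow> (\<exists>x\<in>X. E u x) \<longleftrightarrow> (\<exists>x\<in>X. E v x)"
begin

lemma H_edge_G_edge: "EH u v \<Longrightarrow> E u v"
  using subgraph unfolding subgraph_def by blast

lemma H_edge_sym: "EH u v \<Longrightarrow> EH v u"
  using subgraph unfolding subgraph_def simple_graph_def by blast

lemma VH_subset: "VH \<subseteq> V"
  using subgraph unfolding subgraph_def by blast

lemma profile_eq_if_H_edge:
  assumes "EH u v" "level u \<le> k" "level v \<le> k"
  shows "profile c k u = profile c k v"
proof -
  have "u \<in> V" "v \<in> V" using H_edge_G_edge[OF assms(1)] edge_in_V by auto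
  have "(\<exists>x\<in>X. E u x) \<longleftrightarrow> (\<exists>x\<in>X. E v x)"
    if "X \<subseteq> upper (Suc k)" "connected_in E X" "c < chi E X" for X
  proof (rule no_witness[OF assms(1) _ that(2) _ that(3)])
    show "X \<subseteq> V" using that(1) upper_subset by blast
    show "\<forall>x\<in>X. earlier n W u x \<and> earlier n W v x"
      using that(1) assms(2,3) \<open>u \<in> V\<close> \<open>v \<in> V\<close> earlier_iff_level unfolding upper_def by auto
  qed
  then show ?thesis unfolding profile_def by blast
qed

definition dominated_levels :: "'a \<Rightarrow> nat set" where
  "dominated_levels x = {k. level x \<le> k \<and> profile_dominated c k x}"

definition dominated :: "'a set" where
  "dominated = {x \<in> VH. dominated_levels x \<noteq> {}}"

definition dominator :: "'a \<Rightarrow> 'a" where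
  "dominator x = (SOME p. \<forall>y. profile c (Max (dominated_levels x)) y
                              = profile c (Max (dominated_levels x)) x \<longrightarrow> E y p)"

lemma finite_dominated_levels: "finite (dominated_levels x)"
  by (rule finite_subset[of _ "{..<n}"]) (auto simp: dominated_levels_def dest: profile_dominated_less)

lemma Max_dominated_levels: "x \<in> dominated \<Longrightarrow> Max (dominated_levels x) \<in> dominated_levels x"
  unfolding dominated_def using finite_dominated_levels Max_in by blast

lemma dominator_adjacent: "x \<in> dominated \<Longrightarrow> E x (dominator x)"
proof -
  assume "x \<in> dominated"
  then have "profile_dominated c (Max (dominated_levels x)) x"
    using Max_dominated_levels dominated_levels_def by blast
  then have "\<forall>y. profile c (Max (dominated_levels x)) y = profile c (Max (dominated_levels x)) x
      \<longrightarrow> E y (dominator x)"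
    unfolding profile_dominated_def dominator_def by (rule someI_ex)
  then show ?thesis by blast
qed

text \<open>Above both levels the profiles of \<open>u\<close> and \<open>v\<close> agree, so their highest dominated levels coincide.\<close>

lemma dominator_eq_if_H_edge:
  assumes "EH u v" "u \<in> dominated" "v \<in> dominated" "level u \<le> level v"
  shows "dominator u = dominator v"
proof -
  let ?D = dominated_levels
  have same: "k \<in> ?D u \<longleftrightarrow> k \<in> ?D v" if "level v \<le> k" for k
    using profile_eq_if_H_edge[OF assms(1)] that assms(4)
    unfolding dominated_levels_def profile_dominated_def by auto
  have v_le: "level v \<le> Max (?D v)"
    using Max_dominated_levels[OF assms(3)] unfolding dominated_levels_def by simp
  have "Max (?D v) \<in> ?D u" using same[OF v_le] Max_dominated_levels[OF assms(3)] by simp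
  then have le: "Max (?D v) \<le> Max (?D u)" using finite_dominated_levels by (rule Max_ge[rotated])
  have "Max (?D u) \<in> ?D v" using same[of "Max (?D u)"] v_le le Max_dominated_levels[OF assms(2)] by simp
  then have "Max (?D u) \<le> Max (?D v)" using finite_dominated_levels by (rule Max_ge[rotated])
  with le have eq: "Max (?D u) = Max (?D v)" by simp
  with v_le have "profile c (Max (?D u)) u = profile c (Max (?D u)) v"
    using profile_eq_if_H_edge[OF assms(1)] assms(4) by simp
  then show ?thesis unfolding dominator_def eq by simp
qed

lemma dominated_colouring: "\<exists>f. colouring EH dominated (chi_rho V E 1) f"
proof (rule colouring_piecewise[where S = "\<lambda>x. ball V E (dominator x) 1" and E = E])
  fix x assume x: "x \<in> dominated"
  then show "x \<in> ball V E (dominator x) 1"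
    using dominator_adjacent symp_E edge_in_V unfolding ball_one by (auto dest: sympD)
  show "\<exists>g. colouring E (ball V E (dominator x) 1) (chi_rho V E 1) g"
    using x dominator_adjacent edge_in_V finite_V irreflp_E
    by (intro colouring_if_chi_le chi_ball_le_chi_rho) (auto simp: ball_one)
next
  fix x y assume "x \<in> dominated" "y \<in> dominated" "EH x y"
  then show "ball V E (dominator x) 1 = ball V E (dominator y) 1 \<and> E x y"
    using dominator_eq_if_H_edge H_edge_sym H_edge_G_edge by (metis nat_le_linear)
qed

definition small :: "'a set" where
  "small = {x \<in> VH. chi E (upper_component x) \<le> c + chi_rho V E 1}"

lemma small_colouring: "\<exists>f. colouring EH small (c + chi_rho V E 1) f"
proof -
  obtain f where "colouring E {x \<in> V. chi E (upper_component x) \<le> c + chi_rho V E 1} (c + chi_rho V E 1) f"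
    using small_upper_components_colouring ..
  then have "colouring E small (c + chi_rho V E 1) f"
    using VH_subset unfolding small_def by (auto elim: colouring_subset)
  then show ?thesis using H_edge_G_edge by (blast intro: colouring_subrel)
qed

lemma level_eq_if_H_edge:
  assumes "EH x y" "x \<in> VH - small - dominated" "y \<in> VH - small - dominated"
  shows "level x = level y"
proof -
  have "\<not> level x < level y" if "EH x y" "x \<in> VH - small - dominated" "y \<in> VH - small - dominated" for x y
  proof
    assume "level x < level y"
    moreover have "c + chi_rho V E 1 < chi E (upper_component y)"
      using that(3) unfolding small_def by auto
    ultimately have "profile_dominated c (level x) x"
      using that(2) VH_subset H_edge_G_edge[OF that(1)] by (auto intro: profile_dominated_if_edge_up)
    then have "x \<in> dominated" using that(2) unfolding dominated_def dominated_levels_def by auto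
    with that(2) show False by blast
  qed
  then show ?thesis using assms H_edge_sym by (meson nat_neq_iff)
qed

lemma remaining_colouring: "\<exists>f. colouring EH (VH - small - dominated) w f"
proof (rule colouring_piecewise[where S = "\<lambda>x. W (level x)" and E = E])
  fix x assume "x \<in> VH - small - dominated"
  then have "x \<in> V" using VH_subset by blast
  then show "x \<in> W (level x)" by (rule in_W_level)
  show "\<exists>g. colouring E (W (level x)) w g"
    using \<open>x \<in> V\<close> level_less W_subset finite_V irreflp_E colourable_parts
    by (meson colouring_if_chi_le finite_subset)
next
  fix x y assume "x \<in> VH - small - dominated" "y \<in> VH - small - dominated" "EH x y"
  then show "W (level x) = W (level y) \<and> E x y"
    using level_eq_if_H_edge H_edge_G_edge by simp
qed

lemma chi_subgraph_le: "chi EH VH \<le> w + 2 * (c + chi_rho V E 1)"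
proof -
  obtain f1 where "colouring EH small (c + chi_rho V E 1) f1" using small_colouring ..
  moreover obtain f2 where "colouring EH dominated (chi_rho V E 1) f2" using dominated_colouring ..
  moreover obtain f3 where "colouring EH (VH - small - dominated) w f3" using remaining_colouring ..
  ultimately obtain f where
    "colouring EH (small \<union> dominated \<union> (VH - small - dominated)) (c + chi_rho V E 1 + chi_rho V E 1 + w) f"
    using colouring_Un by blast
  moreover have "small \<union> dominated \<union> (VH - small - dominated) = VH"
    unfolding small_def dominated_def by blast
  ultimately have "chi EH VH \<le> c + chi_rho V E 1 + chi_rho V E 1 + w"
    using chi_le_colouring by metis
  then show ?thesis by simp
qed

end

theorem mainTheorem3:
  fixes V :: "'a set" and E :: "'a \<Rightarrow> 'a \<Rightarrow> bool"
    and VH :: "'a set" and EH :: "'a \<Rightarrow> 'a \<Rightarrow> bool"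
    and W :: "nat \<Rightarrow> 'a set" and n w c :: nat
  assumes "simple_graph V E"
    and "colourable_grading E V n W w"
    and "subgraph VH EH V E"
    and "chi EH VH > w + 2 * (c + chi_rho V E 1)"
  shows "\<exists>u v X. EH u v \<and> X \<subseteq> V \<and> connected_in E X
           \<and> (\<forall>x\<in>X. earlier n W u x \<and> earlier n W v x)
           \<and> ((\<exists>x\<in>X. E u x) \<noteq> (\<exists>x\<in>X. E v x))
           \<and> chi E X > c"
proof (rule ccontr)
  assume "\<not> ?thesis"
  then interpret witness_free_subgraph V E n W w c VH EH
    using assms(1-3) unfolding colourable_grading_def by unfold_locales blast+
  show False using chi_subgraph_le assms(4) by simp
qed

end
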